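(* There is a constant $c_2\in(0,\infty)$ such that for all $\beta\in(0,\infty)$, $\Delta\in(0,1)$, even $L\ge2$, $\theta^\star\in[0,2\pi)$ and $\alpha\in\{1,2,3\}$: if $\widetilde\chi_{\Delta,L}(\boldsymbol\theta)=1$ and $\tilde{\boldsymbol\theta}=(\tilde\theta_{\boldsymbol r})$ is obtained by setting $\tilde\theta_{\boldsymbol r}=\theta_{\boldsymbol r}$ for $\boldsymbol r$ with even $\alpha$-th coordinate and $\tilde\theta_{\boldsymbol r}=2\phi_\alpha-\theta_{\boldsymbol r}$ for $\boldsymbol r$ with odd $\alpha$-th coordinate (all $\tilde\theta_{\boldsymbol r}$ taken as real representatives within $\Delta$ of $\theta^\star$), then $$\bigl|\beta\mathscr H_L(\boldsymbol\theta)-\widetilde{\mathscr I}_{L,\alpha}(\tilde{\boldsymbol\theta})\bigr|\le c_2(\beta J)\Delta^3L^3.$$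
   Context: $\mathscr H_L(\boldsymbol\theta)=\frac J2\sum_{\boldsymbol r\in\mathbb T_L}\sum_{\gamma=1}^3(\cos(\theta_{\boldsymbol r}-\phi_\gamma)-\cos(\theta_{\boldsymbol r+\hat{\mathrm e}_\gamma}-\phi_\gamma))^2$ with $\phi_1=0,\phi_2=\tfrac{2\pi}3,\phi_3=-\tfrac{2\pi}3$, $J>0$. $\widetilde\chi_{\Delta,L}$ is the indicator that $|\theta_{\boldsymbol r}-\theta^\star|<\Delta$ (mod $2\pi$) for $\boldsymbol r$ with even $\alpha$-th coordinate and $|\theta_{\boldsymbol r}-(2\phi_\alpha-\theta^\star)|<\Delta$ for $\boldsymbol r$ with odd $\alpha$-th coordinate. With $q_1=\sin^2\theta^\star$, $q_2=\sin^2(\theta^\star-\tfrac{2\pi}3)$, $q_3=\sin^2(\theta^\star+\tfrac{2\pi}3)$, let $q^{(\alpha)}_{\gamma,\boldsymbol r}=q_\gamma$ if the $\alpha$-th coordinate of $\boldsymbol r$ is even, while for odd $\alpha$-th coordinate $q^{(\alpha)}_{\alpha,\boldsymbol r}=q_\alpha$ and the two values $q_{\gamma'}$, $\gamma'\ne\alpha$, are interchanged. Define $\widetilde{\mathscr I}_{L,\alpha}(\boldsymbol\theta)=\frac{\beta J}2\sum_{\boldsymbol r\in\mathbb T_L}\sum_{\gamma=1}^3q^{(\alpha)}_{\gamma,\boldsymbol r}(\theta_{\boldsymbol r}-\theta_{\boldsymbol r+\hat{\mathrm e}_\gamma})^2$. *)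

theory Defs
  imports Complex_Main
begin

type_synonym site = "nat \<times> nat \<times> nat"

definition torus :: "nat \<Rightarrow> site set" where
  "torus L = {0..<L} \<times> {0..<L} \<times> {0..<L}"

fun coord :: "nat \<Rightarrow> site \<Rightarrow> nat" where
  "coord g (a, b, c) = (if g = 1 then a else if g = 2 then b else c)"

fun shift :: "nat \<Rightarrow> nat \<Rightarrow> site \<Rightarrow> site" where
  "shift L g (a, b, c) =
     (if g = 1 then ((a + 1) mod L, b, c)
      else if g = 2 then (a, (b + 1) mod L, c)
      else (a, b, (c + 1) mod L))"

definition phi :: "nat \<Rightarrow> real" where
  "phi g = (if g = 1 then 0 else if g = 2 then 2 * pi / 3 else - 2 * pi / 3)"

definition H :: "real \<Rightarrow> nat \<Rightarrow> (site \<Rightarrow> real) \<Rightarrow> real" where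
  "H J L \<theta> = J / 2 * (\<Sum>r\<in>torus L. \<Sum>g\<in>{1,2,3::nat}.
      (cos (\<theta> r - phi g) - cos (\<theta> (shift L g r) - phi g))\<^sup>2)"

definition near_mod :: "real \<Rightarrow> real \<Rightarrow> real \<Rightarrow> bool" where
  "near_mod D x y \<longleftrightarrow> (\<exists>k::int. \<bar>x - y - 2 * pi * of_int k\<bar> < D)"

definition chi :: "real \<Rightarrow> nat \<Rightarrow> real \<Rightarrow> nat \<Rightarrow> (site \<Rightarrow> real) \<Rightarrow> bool" where
  "chi D L ts a \<theta> \<longleftrightarrow> (\<forall>r\<in>torus L.
      (even (coord a r) \<longrightarrow> near_mod D (\<theta> r) ts) \<and>
      (odd (coord a r) \<longrightarrow> near_mod D (\<theta> r) (2 * phi a - ts)))"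

definition q :: "real \<Rightarrow> nat \<Rightarrow> real" where
  "q ts g = (if g = 1 then (sin ts)\<^sup>2
             else if g = 2 then (sin (ts - 2 * pi / 3))\<^sup>2
             else (sin (ts + 2 * pi / 3))\<^sup>2)"

(* q^{(alpha)}_{gamma,r}; for gamma \<noteq> alpha in {1,2,3}, the other index is 6 - alpha - gamma *)
definition qa :: "real \<Rightarrow> nat \<Rightarrow> nat \<Rightarrow> site \<Rightarrow> real" where
  "qa ts a g r = (if even (coord a r) \<or> g = a then q ts g else q ts (6 - a - g))"

definition Itilde :: "real \<Rightarrow> real \<Rightarrow> real \<Rightarrow> nat \<Rightarrow> nat \<Rightarrow> (site \<Rightarrow> real) \<Rightarrow> real" where
  "Itilde \<beta> J ts L a \<theta> = \<beta> * J / 2 * (\<Sum>r\<in>torus L. \<Sum>g\<in>{1,2,3::nat}.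
      qa ts a g r * (\<theta> r - \<theta> (shift L g r))\<^sup>2)"

end

theory Submission
  imports Defs
begin

(* On the sites whose alpha-th coordinate is odd, reflect both the angle and the phases,
   t \<mapsto> 2 phi_alpha - t.  This leaves every cos (theta_r - phi_gamma) unchanged, the reflected
   phase 2 phi_alpha - phi_gamma is the same at both ends of a gamma-bond, and modulo 2 pi it is
   the phase of the third direction, so sin\<^sup>2 (theta* - psi) is exactly q^(alpha)_(gamma,r).
   Each bond term of H thus becomes (cos (x - psi) - cos (y - psi))\<^sup>2 with x, y within Delta of
   theta*, and linearising cos at theta* (mean value theorem) shows that it differs from
   sin\<^sup>2 (theta* - psi) (x - y)\<^sup>2 by at most 12 Delta\<^sup>3.  Summing over the 3 L\<^sup>3 bonds gives c2 = 18. *)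

lemma sin_add_int_2pi: "sin (x + 2 * pi * of_int k) = sin x"
  by (simp add: sin_add)

lemma cos_add_int_2pi: "cos (x + 2 * pi * of_int k) = cos x"
  by (simp add: cos_add)

lemma abs_sin_diff_le:
  fixes x y :: real
  shows "\<bar>sin x - sin y\<bar> \<le> \<bar>x - y\<bar>"
proof -
  have "\<bar>sin x - sin y\<bar> = 2 * \<bar>sin ((x - y) / 2)\<bar> * \<bar>cos ((x + y) / 2)\<bar>"
    by (simp add: sin_diff_sin abs_mult)
  also have "\<dots> \<le> 2 * \<bar>(x - y) / 2\<bar> * 1"
    by (intro mult_mono abs_sin_x_le_abs_x abs_cos_le_one) auto
  finally show ?thesis by simp
qed

lemma cos_diff_linearization_ordered:
  fixes x y t D p :: real
  assumes "x < y" "\<bar>x - t\<bar> < D" "\<bar>y - t\<bar> < D"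
  shows "\<bar>cos (y - p) - cos (x - p) + sin (t - p) * (y - x)\<bar> \<le> (y - x) * D"
proof -
  obtain z where z: "x < z" "z < y" and mvt:
      "cos (y - p) + sin (t - p) * y - (cos (x - p) + sin (t - p) * x)
         = (y - x) * (sin (t - p) - sin (z - p))"
    using MVT2[OF \<open>x < y\<close>, of "\<lambda>u. cos (u - p) + sin (t - p) * u"]
    by (force intro!: derivative_eq_intros)
  have "\<bar>sin (t - p) - sin (z - p)\<bar> \<le> D"
    using abs_sin_diff_le[of "t - p" "z - p"] assms z by linarith
  then have "\<bar>(y - x) * (sin (t - p) - sin (z - p))\<bar> \<le> (y - x) * D"
    using \<open>x < y\<close> by (simp add: abs_mult mult_left_mono)
  then show ?thesis
    using mvt by (simp add: algebra_simps)
qed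

lemma cos_diff_linearization:
  fixes x y t D p :: real
  assumes "\<bar>x - t\<bar> < D" "\<bar>y - t\<bar> < D"
  shows "\<bar>cos (x - p) - cos (y - p) + sin (t - p) * (x - y)\<bar> \<le> \<bar>x - y\<bar> * D"
  using cos_diff_linearization_ordered[OF _ assms, of p]
    cos_diff_linearization_ordered[OF _ assms(2,1), of p]
  by (cases x y rule: linorder_cases) (auto simp: abs_minus_commute algebra_simps)

lemma cos_diff_square_approx:
  fixes x y t D p :: real
  assumes x: "\<bar>x - t\<bar> < D" and y: "\<bar>y - t\<bar> < D" and "D \<le> 1"
  shows "\<bar>(cos (x - p) - cos (y - p))\<^sup>2 - (sin (t - p))\<^sup>2 * (x - y)\<^sup>2\<bar> \<le> 12 * D ^ 3"
proof -
  define u s d where "u = cos (x - p) - cos (y - p)" and "s = sin (t - p)" and "d = x - y"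
  have plus: "\<bar>u + s * d\<bar> \<le> \<bar>d\<bar> * D"
    using cos_diff_linearization[OF x y, of p] by (simp add: u_def s_def d_def)
  have "\<bar>u - s * d\<bar> \<le> \<bar>u + s * d\<bar> + 2 * \<bar>s\<bar> * \<bar>d\<bar>"
    using abs_triangle_ineq4[of "u + s * d" "2 * s * d"] by (simp add: abs_mult mult.commute)
  also have "\<dots> \<le> \<bar>d\<bar> * D + 2 * 1 * \<bar>d\<bar>"
    using plus by (intro add_mono mult_right_mono) (auto simp: s_def)
  also have "\<dots> \<le> 3 * \<bar>d\<bar>"
    using \<open>D \<le> 1\<close> by (simp add: mult_left_le)
  finally have minus: "\<bar>u - s * d\<bar> \<le> 3 * \<bar>d\<bar>" .
  have "\<bar>u\<^sup>2 - s\<^sup>2 * d\<^sup>2\<bar> = \<bar>u + s * d\<bar> * \<bar>u - s * d\<bar>"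
    by (simp add: abs_mult [symmetric] power2_eq_square algebra_simps)
  also have "\<dots> \<le> (\<bar>d\<bar> * D) * (3 * \<bar>d\<bar>)"
    using plus minus by (intro mult_mono) auto
  also have "\<dots> = 3 * D * d\<^sup>2"
    by (simp add: power2_eq_square)
  also have "\<dots> \<le> 3 * D * (2 * D)\<^sup>2"
  proof -
    have "\<bar>d\<bar> \<le> 2 * D"
      using x y by (simp add: d_def)
    then have "d\<^sup>2 \<le> (2 * D)\<^sup>2"
      using power_mono[of "\<bar>d\<bar>" "2 * D" 2] by simp
    then show ?thesis
      using x by (intro mult_left_mono) auto
  qed
  finally show ?thesis
    by (simp add: u_def s_def d_def power2_eq_square power3_eq_cube)
qed

definition flip_odd :: "nat \<Rightarrow> site \<Rightarrow> real \<Rightarrow> real" where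
  "flip_odd a r t = (if even (coord a r) then t else 2 * phi a - t)"

lemma cos_flip_odd_rep: "cos (flip_odd a r t + 2 * pi * of_int k - flip_odd a r p) = cos (t - p)"
proof -
  have "cos (flip_odd a r t - flip_odd a r p) = cos (t - p)"
    by (simp add: flip_odd_def cos_minus [of "t - p", symmetric])
  then show ?thesis
    using cos_add_int_2pi[of "flip_odd a r t - flip_odd a r p" k] by (simp add: algebra_simps)
qed

lemma coord_shift_other:
  assumes "a \<in> {1,2,3}" "g \<in> {1,2,3}" "g \<noteq> a"
  shows "coord a (shift L g r) = coord a r"
  using assms by (cases r) auto

lemma flip_odd_shift_phi:
  assumes "a \<in> {1,2,3}" "g \<in> {1,2,3}"
  shows "flip_odd a (shift L g r) (phi g) = flip_odd a r (phi g)"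
  using coord_shift_other[OF assms, of L r] by (cases "g = a") (auto simp: flip_odd_def)

lemma shift_in_torus: "r \<in> torus L \<Longrightarrow> shift L g r \<in> torus L"
  by (cases r) (auto simp: torus_def)

lemma q_eq_sin_phi: "g \<in> {1,2,3} \<Longrightarrow> q ts g = (sin (ts - phi g))\<^sup>2"
  by (auto simp: q_def phi_def)

lemma phi_reflection_mod_2pi:
  assumes "a \<in> {1,2,3}" "g \<in> {1,2,3}" "g \<noteq> a"
  shows "\<exists>k::int. 2 * phi a - phi g = phi (6 - a - g) + 2 * pi * of_int k"
  using assms by (auto simp: phi_def intro: exI[of _ 0] exI[of _ 1] exI[of _ "-1"])

lemma qa_eq_sin_flip_odd:
  assumes "a \<in> {1,2,3}" "g \<in> {1,2,3}"
  shows "qa ts a g r = (sin (ts - flip_odd a r (phi g)))\<^sup>2"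
proof (cases "even (coord a r) \<or> g = a")
  case True
  then show ?thesis
    using assms by (auto simp: qa_def flip_odd_def q_eq_sin_phi)
next
  case False
  then obtain k :: int where k: "2 * phi a - phi g = phi (6 - a - g) + 2 * pi * of_int k"
    using phi_reflection_mod_2pi[OF assms] by blast
  have "6 - a - g \<in> {1,2,3}"
    using assms False by auto
  then have "qa ts a g r = (sin (ts - phi (6 - a - g) + 2 * pi * of_int (- k)))\<^sup>2"
    using False by (simp add: qa_def q_eq_sin_phi sin_add_int_2pi del: of_int_minus)
  also have "ts - phi (6 - a - g) + 2 * pi * of_int (- k) = ts - flip_odd a r (phi g)"
    using False by (simp add: flip_odd_def k)
  finally show ?thesis .
qed

lemma bond_term_approx:
  fixes \<theta> \<theta>' :: "site \<Rightarrow> real"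
  assumes a: "a \<in> {1,2,3}" and g: "g \<in> {1,2,3}" and "D \<le> 1"
    and rep: "\<theta>' r = flip_odd a r (\<theta> r) + 2 * pi * of_int k"
    and rep_shift: "\<theta>' (shift L g r) = flip_odd a (shift L g r) (\<theta> (shift L g r)) + 2 * pi * of_int l"
    and near: "\<bar>\<theta>' r - ts\<bar> < D" and near_shift: "\<bar>\<theta>' (shift L g r) - ts\<bar> < D"
  shows "\<bar>(cos (\<theta> r - phi g) - cos (\<theta> (shift L g r) - phi g))\<^sup>2
           - qa ts a g r * (\<theta>' r - \<theta>' (shift L g r))\<^sup>2\<bar> \<le> 12 * D ^ 3"
proof -
  define p where "p = flip_odd a r (phi g)"
  have "cos (\<theta> r - phi g) = cos (\<theta>' r - p)"
    using cos_flip_odd_rep[of a r "\<theta> r" k "phi g"] by (simp add: rep p_def)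
  moreover have "cos (\<theta> (shift L g r) - phi g) = cos (\<theta>' (shift L g r) - p)"
    using cos_flip_odd_rep[of a "shift L g r" "\<theta> (shift L g r)" l "phi g"]
    by (simp add: rep_shift p_def flip_odd_shift_phi[OF a g])
  moreover have "qa ts a g r = (sin (ts - p))\<^sup>2"
    by (simp add: qa_eq_sin_flip_odd[OF a g] p_def)
  ultimately show ?thesis
    using cos_diff_square_approx[OF near near_shift \<open>D \<le> 1\<close>, of p] by simp
qed

lemma abs_sum_bonds_le:
  assumes "\<And>r g. r \<in> torus L \<Longrightarrow> g \<in> {1,2,3} \<Longrightarrow> \<bar>f r g\<bar> \<le> B"
  shows "\<bar>\<Sum>r\<in>torus L. \<Sum>g\<in>{1,2,3::nat}. f r g\<bar> \<le> 3 * real L ^ 3 * (B :: real)"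
proof -
  have "\<bar>\<Sum>r\<in>torus L. \<Sum>g\<in>{1,2,3::nat}. f r g\<bar> \<le> (\<Sum>r\<in>torus L. \<Sum>g\<in>{1,2,3::nat}. \<bar>f r g\<bar>)"
    by (rule order_trans[OF sum_abs sum_mono[OF sum_abs]])
  also have "\<dots> \<le> (\<Sum>r\<in>torus L. \<Sum>g\<in>{1,2,3::nat}. B)"
    by (intro sum_mono assms)
  also have "\<dots> = 3 * real L ^ 3 * B"
    by (simp add: torus_def card_cartesian_product power3_eq_cube)
  finally show ?thesis .
qed

lemma scaled_H_minus_Itilde:
  "\<beta> * H J L \<theta> - Itilde \<beta> J ts L a \<theta>' = \<beta> * J / 2 * (\<Sum>r\<in>torus L. \<Sum>g\<in>{1,2,3::nat}.
      (cos (\<theta> r - phi g) - cos (\<theta> (shift L g r) - phi g))\<^sup>2 - qa ts a g r * (\<theta>' r - \<theta>' (shift L g r))\<^sup>2)"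
  by (simp add: H_def Itilde_def sum_subtractf right_diff_distrib)

lemma energy_deviation_le:
  fixes \<theta> \<theta>' :: "site \<Rightarrow> real"
  assumes "0 \<le> \<beta> * J" and D: "D \<le> 1" and a: "a \<in> {1,2,3}"
    and rep: "\<And>r. r \<in> torus L \<Longrightarrow> \<exists>k::int. \<theta>' r = flip_odd a r (\<theta> r) + 2 * pi * of_int k"
    and near: "\<And>r. r \<in> torus L \<Longrightarrow> \<bar>\<theta>' r - ts\<bar> < D"
  shows "\<bar>\<beta> * H J L \<theta> - Itilde \<beta> J ts L a \<theta>'\<bar> \<le> 18 * (\<beta> * J) * D ^ 3 * real L ^ 3"
proof -
  have "\<bar>\<beta> * H J L \<theta> - Itilde \<beta> J ts L a \<theta>'\<bar> \<le> \<beta> * J / 2 * (3 * real L ^ 3 * (12 * D ^ 3))"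
    unfolding scaled_H_minus_Itilde abs_mult
  proof (intro mult_mono abs_sum_bonds_le)
    fix r and g :: nat
    assume r: "r \<in> torus L" and g: "g \<in> {1,2,3}"
    have s: "shift L g r \<in> torus L"
      using r by (rule shift_in_torus)
    obtain k l where "\<theta>' r = flip_odd a r (\<theta> r) + 2 * pi * of_int k"
      and "\<theta>' (shift L g r) = flip_odd a (shift L g r) (\<theta> (shift L g r)) + 2 * pi * of_int l"
      using rep[OF r] rep[OF s] by blast
    then show "\<bar>(cos (\<theta> r - phi g) - cos (\<theta> (shift L g r) - phi g))\<^sup>2
           - qa ts a g r * (\<theta>' r - \<theta>' (shift L g r))\<^sup>2\<bar> \<le> 12 * D ^ 3"
      by (rule bond_term_approx[OF a g D _ _ near[OF r] near[OF s]])
  qed (use assms in auto)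
  then show ?thesis
    by (simp add: mult_ac)
qed

theorem lemma4p6:
  shows "\<exists>c2>0. \<forall>J>0. \<forall>\<beta>>0. \<forall>D L ts a \<theta> \<theta>'.
     0 < D \<and> D < 1 \<and> even L \<and> L \<ge> 2 \<and> 0 \<le> ts \<and> ts < 2 * pi \<and> a \<in> {1,2,3} \<and>
     chi D L ts a \<theta> \<and>
     (\<forall>r\<in>torus L. (even (coord a r) \<longrightarrow> (\<exists>k::int. \<theta>' r = \<theta> r + 2 * pi * of_int k)) \<and>
                   (odd (coord a r) \<longrightarrow> (\<exists>k::int. \<theta>' r = 2 * phi a - \<theta> r + 2 * pi * of_int k)) \<and>
                   \<bar>\<theta>' r - ts\<bar> < D)
     \<longrightarrow> \<bar>\<beta> * H J L \<theta> - Itilde \<beta> J ts L a \<theta>'\<bar> \<le> c2 * (\<beta> * J) * D ^ 3 * real L ^ 3"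
  by (rule exI[of _ 18]) (auto intro!: energy_deviation_le simp: flip_odd_def)

end
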